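(* Let $\pi$ be a positive differentiable probability density on $\mathbb{R}$ such that $(\log\pi)'$ is bounded in some neighbourhood of $0$, and for $\lambda>0$ let $\pi^{(\lambda)}(x)=\lambda^{-1}\pi(x/\lambda)$. Fix $\sigma>0$ and $x\in\mathbb{R}$. Let $Q^R(x,\cdot)=N(x,\sigma^2)$, let $Q^M_\lambda(x,\cdot)=N\big(x+\frac{\sigma^2}{2}(\log\pi^{(\lambda)})'(x),\sigma^2\big)$, and let $Q^B_\lambda(x,dy)=\frac{2\mu_\sigma(y-x)}{1+e^{-(\log\pi^{(\lambda)})'(x)(y-x)}}dy$ where $\mu_\sigma$ is the $N(0,\sigma^2)$ density. Then both $\|Q^M_\lambda(x,\cdot)-Q^R(x,\cdot)\|_{TV}$ and $\|Q^B_\lambda(x,\cdot)-Q^R(x,\cdot)\|_{TV}$ are at most $\Theta(1/\lambda)$ as $\lambda\uparrow\infty$, i.e. $\limsup_{\lambda\to\infty}\lambda\,\|Q^{M/B}_\lambda(x,\cdot)-Q^R(x,\cdot)\|_{TV}<\infty$.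
   Context: $\|\mu-\nu\|_{TV}=\sup_{A}|\mu(A)-\nu(A)|$. *)

theory Defs
  imports "HOL-Probability.Probability"
begin

definition tv_dist :: "real measure \<Rightarrow> real measure \<Rightarrow> real" where
  "tv_dist M N = (SUP A \<in> sets borel. \<bar>measure M A - measure N A\<bar>)"

definition scaled_density :: "(real \<Rightarrow> real) \<Rightarrow> real \<Rightarrow> real \<Rightarrow> real" where
  "scaled_density p l y = p (y / l) / l"

definition QR :: "real \<Rightarrow> real \<Rightarrow> real measure" where
  "QR \<sigma> x = density lborel (\<lambda>y. ennreal (normal_density x \<sigma> y))"

definition QM :: "(real \<Rightarrow> real) \<Rightarrow> real \<Rightarrow> real \<Rightarrow> real \<Rightarrow> real measure" where
  "QM p l \<sigma> x = density lborel (\<lambda>y. ennreal (normal_density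
      (x + \<sigma>\<^sup>2 / 2 * deriv (\<lambda>t. ln (scaled_density p l t)) x) \<sigma> y))"

definition QB :: "(real \<Rightarrow> real) \<Rightarrow> real \<Rightarrow> real \<Rightarrow> real \<Rightarrow> real measure" where
  "QB p l \<sigma> x = density lborel (\<lambda>y. ennreal (2 * normal_density 0 \<sigma> (y - x) /
      (1 + exp (- deriv (\<lambda>t. ln (scaled_density p l t)) x * (y - x)))))"

end

theory Submission
  imports Defs
begin

text \<open>
  Rescaling by \<open>\<lambda>\<close> turns the log-gradient at \<open>x\<close> into \<open>g = (log \<pi>)'(x/\<lambda>)/\<lambda>\<close>, and since
  \<open>x/\<lambda> \<rightarrow> 0\<close> the local bound on \<open>(log \<pi>)'\<close> gives \<open>\<lambda> |g| \<le> B\<close> for large \<open>\<lambda>\<close>.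
  Both proposals depend on \<pi> only through \<open>g\<close>, and both densities differ from the
  \<open>N(x, \<sigma>\<^sup>2)\<close> density by at most \<open>|g|\<close> times a fixed integrable function: the MALA
  proposal is \<open>N(x, \<sigma>\<^sup>2)\<close> shifted by \<open>\<sigma>\<^sup>2 g / 2\<close>, and the Barker weight
  \<open>2 / (1 + e\<^sup>-\<^sup>u)\<close> differs from 1 by at most \<open>|u|\<close>. Bounding the total variation distance
  by the \<open>L\<^sup>1\<close> distance of the densities gives \<open>\<lambda> \<cdot> TV = O(\<lambda> |g|) = O(1)\<close>.
\<close>

lemma measure_density_eq_integral:
  fixes f :: "real \<Rightarrow> real"
  assumes f: "integrable lborel f" and nonneg: "\<And>y. 0 \<le> f y" and A: "A \<in> sets borel"
  shows "measure (density lborel (\<lambda>y. ennreal (f y))) A = (\<integral>y. f y * indicator A y \<partial>lborel)"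
proof -
  have [measurable]: "A \<in> sets lborel" "f \<in> borel_measurable lborel"
    using A f by auto
  have "emeasure (density lborel (\<lambda>y. ennreal (f y))) A = (\<integral>\<^sup>+ y. ennreal (f y) * indicator A y \<partial>lborel)"
    using A by (intro emeasure_density) auto
  also have "\<dots> = (\<integral>\<^sup>+ y. ennreal (f y * indicator A y) \<partial>lborel)"
    by (intro nn_integral_cong) (auto split: split_indicator)
  also have "\<dots> = ennreal (\<integral>y. f y * indicator A y \<partial>lborel)"
    using f nonneg A by (intro nn_integral_eq_integral integrable_real_mult_indicator) auto
  finally show ?thesis
    using nonneg by (simp add: measure_def integral_nonneg_AE)
qed

lemma tv_dist_density_le:
  fixes f g h :: "real \<Rightarrow> real"
  assumes f: "integrable lborel f" and g: "integrable lborel g" and h: "integrable lborel h"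
    and f_nonneg: "\<And>y. 0 \<le> f y" and g_nonneg: "\<And>y. 0 \<le> g y"
    and dominated: "\<And>y. \<bar>f y - g y\<bar> \<le> h y"
  shows "tv_dist (density lborel (\<lambda>y. ennreal (f y))) (density lborel (\<lambda>y. ennreal (g y)))
           \<le> (\<integral>y. h y \<partial>lborel)"
  unfolding tv_dist_def
proof (rule cSUP_least)
  fix A :: "real set" assume A: "A \<in> sets borel"
  have [measurable]: "A \<in> sets lborel" using A by simp
  have fA: "integrable lborel (\<lambda>y. f y * indicator A y)"
    and gA: "integrable lborel (\<lambda>y. g y * indicator A y)"
    using f g A by (auto intro!: integrable_real_mult_indicator)
  have "\<bar>measure (density lborel (\<lambda>y. ennreal (f y))) A - measure (density lborel (\<lambda>y. ennreal (g y))) A\<bar>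
      = \<bar>\<integral>y. f y * indicator A y - g y * indicator A y \<partial>lborel\<bar>"
    using measure_density_eq_integral[OF f f_nonneg A] measure_density_eq_integral[OF g g_nonneg A]
      fA gA by simp
  also have "\<dots> \<le> (\<integral>y. \<bar>f y * indicator A y - g y * indicator A y\<bar> \<partial>lborel)"
    by (rule integral_abs_bound)
  also have "\<dots> \<le> (\<integral>y. h y \<partial>lborel)"
    using fA gA h dominated
    by (intro integral_mono) (auto split: split_indicator intro: order_trans[OF abs_ge_zero])
  finally show "\<bar>measure (density lborel (\<lambda>y. ennreal (f y))) A
      - measure (density lborel (\<lambda>y. ennreal (g y))) A\<bar> \<le> (\<integral>y. h y \<partial>lborel)" .
qed auto

lemma abs_exp_diff_le:
  fixes a b M :: real
  assumes "a \<le> M" "b \<le> M"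
  shows "\<bar>exp a - exp b\<bar> \<le> \<bar>a - b\<bar> * exp M"
proof -
  have *: "exp v - exp u \<le> (v - u) * exp M" if "u \<le> v" "v \<le> M" for u v :: real
  proof -
    have "exp v - exp u = exp v * (1 - exp (u - v))"
      by (simp add: algebra_simps exp_diff)
    also have "\<dots> \<le> exp v * (v - u)"
      using exp_ge_add_one_self[of "u - v"] by (intro mult_left_mono) (auto simp: algebra_simps)
    also have "\<dots> \<le> exp M * (v - u)"
      using that by (intro mult_right_mono) auto
    finally show ?thesis by (simp add: mult.commute)
  qed
  show ?thesis
    using *[of a b] *[of b a] assms by (cases "a \<le> b") (auto simp: abs_if)
qed

lemma abs_logistic_weight_minus_one_le:
  fixes u :: real
  shows "\<bar>2 / (1 + exp (- u)) - 1\<bar> \<le> \<bar>u\<bar>"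
proof -
  have denom_pos: "0 < 1 + exp (- u)"
    by (simp add: add_pos_pos)
  have "\<bar>exp 0 - exp (- u)\<bar> \<le> \<bar>u\<bar> * exp (max 0 (- u))"
    using abs_exp_diff_le[of 0 "max 0 (- u)" "- u"] by simp
  also have "\<dots> \<le> \<bar>u\<bar> * (1 + exp (- u))"
    by (intro mult_left_mono) (auto simp: max_def)
  finally have "\<bar>1 - exp (- u)\<bar> \<le> \<bar>u\<bar> * (1 + exp (- u))"
    by simp
  moreover have "2 / (1 + exp (- u)) - 1 = (1 - exp (- u)) / (1 + exp (- u))"
    using denom_pos by (simp add: field_simps)
  ultimately show ?thesis
    using denom_pos by (simp add: abs_div divide_le_eq)
qed

lemma normal_density_shift_diff_le:
  fixes \<mu> m y \<sigma> :: real
  assumes \<sigma>: "0 < \<sigma>" and m: "\<bar>m\<bar> \<le> 1"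
  shows "\<bar>normal_density (\<mu> + m) \<sigma> y - normal_density \<mu> \<sigma> y\<bar>
    \<le> \<bar>m\<bar> * (sqrt 2 * exp (1 / (2 * \<sigma>\<^sup>2)) / (2 * \<sigma>\<^sup>2))
        * ((2 * \<bar>y - \<mu>\<bar> + 1) * normal_density \<mu> (sqrt 2 * \<sigma>) y)"
proof -
  define z where "z = y - \<mu>"
  define a where "a = - (z - m)\<^sup>2 / (2 * \<sigma>\<^sup>2)"
  define b where "b = - z\<^sup>2 / (2 * \<sigma>\<^sup>2)"
  \<comment> \<open>Both exponents are at most \<open>M\<close> since \<open>(z - m)\<^sup>2 \<ge> z\<^sup>2/2 - 1\<close>, and \<open>exp M\<close> is again a
      Gaussian in \<open>z\<close>, of variance \<open>2\<sigma>\<^sup>2\<close>: this absorbs the factor \<open>2|z| + 1\<close>.\<close>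
  define M where "M = 1 / (2 * \<sigma>\<^sup>2) - z\<^sup>2 / (4 * \<sigma>\<^sup>2)"
  have s2: "0 < \<sigma>\<^sup>2" using \<sigma> by simp
  have "m\<^sup>2 \<le> 1" using m by (simp add: abs_square_le_1)
  moreover have "2 * (z - m)\<^sup>2 - (z\<^sup>2 - 2) = (z - 2 * m)\<^sup>2 + 2 * (1 - m\<^sup>2)"
    by (simp add: power2_eq_square algebra_simps)
  ultimately have "z\<^sup>2 - 2 \<le> 2 * (z - m)\<^sup>2"
    using zero_le_power2[of "z - 2 * m"] by (smt (verit))
  then have a_le: "a \<le> M"
    unfolding a_def M_def using s2 by (simp add: field_simps)
  have b_le: "b \<le> M"
    unfolding b_def M_def using s2 by (simp add: field_simps) (smt (verit) zero_le_power2)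
  have "\<bar>m * (2 * z - m)\<bar> \<le> \<bar>m\<bar> * (2 * \<bar>z\<bar> + 1)"
    using m by (auto simp: abs_mult intro!: mult_left_mono order_trans[OF abs_triangle_ineq4])
  moreover have "a - b = m * (2 * z - m) / (2 * \<sigma>\<^sup>2)"
    unfolding a_def b_def
    by (simp add: power2_eq_square add_divide_distrib[symmetric] diff_divide_distrib[symmetric])
      (simp add: algebra_simps)
  ultimately have ab: "\<bar>a - b\<bar> \<le> \<bar>m\<bar> * (2 * \<bar>z\<bar> + 1) / (2 * \<sigma>\<^sup>2)"
    using s2 by (simp add: abs_div divide_right_mono)
  have exp_M: "exp M / sqrt (2 * pi * \<sigma>\<^sup>2) = sqrt 2 * exp (1 / (2 * \<sigma>\<^sup>2)) * normal_density \<mu> (sqrt 2 * \<sigma>) y"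
    unfolding M_def z_def normal_density_def using s2
    by (simp add: exp_diff power_mult_distrib real_sqrt_mult) (simp add: field_simps exp_minus_inverse)
  have "normal_density (\<mu> + m) \<sigma> y - normal_density \<mu> \<sigma> y = (exp a - exp b) / sqrt (2 * pi * \<sigma>\<^sup>2)"
    unfolding normal_density_def a_def b_def z_def by (simp add: algebra_simps diff_divide_distrib)
  then have "\<bar>normal_density (\<mu> + m) \<sigma> y - normal_density \<mu> \<sigma> y\<bar> = \<bar>exp a - exp b\<bar> / sqrt (2 * pi * \<sigma>\<^sup>2)"
    by (simp add: abs_div)
  also have "\<dots> \<le> \<bar>m\<bar> * (2 * \<bar>z\<bar> + 1) / (2 * \<sigma>\<^sup>2) * exp M / sqrt (2 * pi * \<sigma>\<^sup>2)"
    using order_trans[OF abs_exp_diff_le[OF a_le b_le] mult_right_mono[OF ab exp_ge_zero]]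
    by (rule divide_right_mono) simp
  also have "\<dots> = \<bar>m\<bar> * (2 * \<bar>z\<bar> + 1) / (2 * \<sigma>\<^sup>2) * (sqrt 2 * exp (1 / (2 * \<sigma>\<^sup>2)) * normal_density \<mu> (sqrt 2 * \<sigma>) y)"
    unfolding exp_M[symmetric] by simp
  also have "\<dots> = \<bar>m\<bar> * (sqrt 2 * exp (1 / (2 * \<sigma>\<^sup>2)) / (2 * \<sigma>\<^sup>2))
        * ((2 * \<bar>y - \<mu>\<bar> + 1) * normal_density \<mu> (sqrt 2 * \<sigma>) y)"
    by (simp add: z_def ac_simps)
  finally show ?thesis .
qed

lemma tv_dist_normal_shift_le:
  fixes \<sigma> x :: real
  assumes \<sigma>: "0 < \<sigma>"
  obtains C where "0 \<le> C"
    and "\<And>m. \<bar>m\<bar> \<le> 1 \<Longrightarrow>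
           tv_dist (density lborel (\<lambda>y. ennreal (normal_density (x + m) \<sigma> y))) (QR \<sigma> x) \<le> C * \<bar>m\<bar>"
proof -
  define K where "K = sqrt 2 * exp (1 / (2 * \<sigma>\<^sup>2)) / (2 * \<sigma>\<^sup>2)"
  define h where "h y = (2 * \<bar>y - x\<bar> + 1) * normal_density x (sqrt 2 * \<sigma>) y" for y
  have "integrable lborel
      (\<lambda>y. 2 * (normal_density x (sqrt 2 * \<sigma>) y * \<bar>y - x\<bar> ^ 1) + normal_density x (sqrt 2 * \<sigma>) y)"
    using \<sigma> by (intro Bochner_Integration.integrable_add integrable_mult_right
        integrable_normal_moment_abs integrable_normal_density) auto
  moreover have "h = (\<lambda>y. 2 * (normal_density x (sqrt 2 * \<sigma>) y * \<bar>y - x\<bar> ^ 1) + normal_density x (sqrt 2 * \<sigma>) y)"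
    by (simp add: h_def fun_eq_iff algebra_simps)
  ultimately have h_int: "integrable lborel h"
    by simp
  have "tv_dist (density lborel (\<lambda>y. ennreal (normal_density (x + m) \<sigma> y))) (QR \<sigma> x)
      \<le> K * integral\<^sup>L lborel h * \<bar>m\<bar>" if m: "\<bar>m\<bar> \<le> 1" for m
  proof -
    have "tv_dist (density lborel (\<lambda>y. ennreal (normal_density (x + m) \<sigma> y))) (QR \<sigma> x)
        \<le> (\<integral>y. \<bar>m\<bar> * K * h y \<partial>lborel)"
      unfolding QR_def
    proof (rule tv_dist_density_le)
      show "integrable lborel (\<lambda>y. \<bar>m\<bar> * K * h y)"
        using h_int by simp
      show "\<bar>normal_density (x + m) \<sigma> y - normal_density x \<sigma> y\<bar> \<le> \<bar>m\<bar> * K * h y" for y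
        unfolding K_def h_def by (rule normal_density_shift_diff_le[OF \<sigma> m])
    qed (use \<sigma> in auto)
    then show ?thesis
      by (simp add: ac_simps)
  qed
  moreover have "0 \<le> K * integral\<^sup>L lborel h"
    unfolding K_def h_def by (intro mult_nonneg_nonneg integral_nonneg_AE) auto
  ultimately show ?thesis
    using that by blast
qed

lemma tv_dist_barker_le:
  fixes \<sigma> x :: real
  assumes \<sigma>: "0 < \<sigma>"
  obtains C where "0 \<le> C"
    and "\<And>g. tv_dist (density lborel (\<lambda>y. ennreal (2 * normal_density 0 \<sigma> (y - x) / (1 + exp (- g * (y - x))))))
                (QR \<sigma> x) \<le> C * \<bar>g\<bar>"
proof -
  define C where "C = (\<integral>y. normal_density x \<sigma> y * \<bar>y - x\<bar> ^ 1 \<partial>lborel)"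
  have denom_pos: "0 < 1 + exp t" for t :: real
    by (simp add: add_pos_pos)
  have "tv_dist (density lborel (\<lambda>y. ennreal (2 * normal_density 0 \<sigma> (y - x) / (1 + exp (- g * (y - x))))))
      (QR \<sigma> x) \<le> C * \<bar>g\<bar>" for g
  proof -
    define f where "f y = 2 * normal_density 0 \<sigma> (y - x) / (1 + exp (- g * (y - x)))" for y
    have f_eq: "f y = normal_density x \<sigma> y * (2 / (1 + exp (- (g * (y - x)))))" for y
      unfolding f_def normal_density_def by simp
    have f_nonneg: "0 \<le> f y" for y
      unfolding f_eq using denom_pos by simp
    have f_le: "f y \<le> normal_density x \<sigma> y * 2" for y
      unfolding f_eq using denom_pos by (intro mult_left_mono) (auto simp: divide_le_eq)
    have "f \<in> borel_measurable lborel"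
      unfolding f_def by measurable
    then have f_int: "integrable lborel f"
    proof (rule Bochner_Integration.integrable_bound[rotated])
      show "integrable lborel (\<lambda>y. normal_density x \<sigma> y * 2)"
        using \<sigma> by simp
      show "AE y in lborel. norm (f y) \<le> norm (normal_density x \<sigma> y * 2)"
        using f_le f_nonneg by (intro AE_I2) simp
    qed
    have "\<bar>f y - normal_density x \<sigma> y\<bar> \<le> \<bar>g\<bar> * (normal_density x \<sigma> y * \<bar>y - x\<bar> ^ 1)" for y
    proof -
      have "f y - normal_density x \<sigma> y = normal_density x \<sigma> y * (2 / (1 + exp (- (g * (y - x)))) - 1)"
        by (simp only: f_eq right_diff_distrib mult_1_right)
      then have "\<bar>f y - normal_density x \<sigma> y\<bar> = normal_density x \<sigma> y * \<bar>2 / (1 + exp (- (g * (y - x)))) - 1\<bar>"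
        by (simp add: abs_mult)
      also have "\<dots> \<le> normal_density x \<sigma> y * \<bar>g * (y - x)\<bar>"
        by (intro mult_left_mono abs_logistic_weight_minus_one_le) simp
      finally show ?thesis
        by (simp add: abs_mult ac_simps)
    qed
    then have "tv_dist (density lborel (\<lambda>y. ennreal (f y))) (QR \<sigma> x)
        \<le> (\<integral>y. \<bar>g\<bar> * (normal_density x \<sigma> y * \<bar>y - x\<bar> ^ 1) \<partial>lborel)"
      unfolding QR_def using \<sigma> f_int f_nonneg
      by (intro tv_dist_density_le integrable_mult_right integrable_normal_moment_abs) auto
    then show ?thesis
      by (simp add: f_def C_def mult.commute)
  qed
  moreover have "0 \<le> C"
    unfolding C_def by (intro integral_nonneg_AE) auto
  ultimately show ?thesis
    using that by blast
qed

lemma deriv_ln_scaled_density: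
  fixes p :: "real \<Rightarrow> real"
  assumes pos: "\<And>y. 0 < p y" and diff: "\<And>y. p differentiable (at y)" and l: "0 < l"
  shows "deriv (\<lambda>t. ln (scaled_density p l t)) x = deriv (\<lambda>t. ln (p t)) (x / l) / l"
proof -
  have p': "(p has_real_derivative deriv p (x / l)) (at (x / l))"
    using diff DERIV_deriv_iff_real_differentiable by blast
  have "((\<lambda>t. ln (p t)) has_real_derivative deriv p (x / l) / p (x / l)) (at (x / l))"
    using pos by (auto intro!: derivative_eq_intros p')
  then have ln_p': "deriv (\<lambda>t. ln (p t)) (x / l) = deriv p (x / l) / p (x / l)"
    by (rule DERIV_imp_deriv)
  have "((\<lambda>t. t / l) has_real_derivative 1 / l) (at x)"
    using l by (auto intro!: derivative_eq_intros)
  from DERIV_chain2[OF p' this]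
  have "((\<lambda>t. p (t / l)) has_real_derivative deriv p (x / l) * (1 / l)) (at x)"
    by simp
  then have "((\<lambda>t. ln (scaled_density p l t)) has_real_derivative deriv p (x / l) / p (x / l) / l) (at x)"
    unfolding scaled_density_def using pos l
    by (auto intro!: derivative_eq_intros simp: field_simps)
  then show ?thesis
    unfolding ln_p' by (rule DERIV_imp_deriv)
qed

lemma eventually_mult_abs_deriv_ln_scaled_density_le:
  fixes p :: "real \<Rightarrow> real"
  assumes pos: "\<And>y. 0 < p y" and diff: "\<And>y. p differentiable (at y)"
    and e: "0 < e" and bound: "\<And>y. \<bar>y\<bar> < e \<Longrightarrow> \<bar>deriv (\<lambda>t. ln (p t)) y\<bar> \<le> B"
  shows "\<forall>\<^sub>F l in at_top. l * \<bar>deriv (\<lambda>t. ln (scaled_density p l t)) x\<bar> \<le> B"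
  using eventually_gt_at_top[of "\<bar>x\<bar> / e"] eventually_gt_at_top[of 0]
proof eventually_elim
  case (elim l)
  then have "\<bar>x / l\<bar> < e"
    using e by (simp add: abs_div field_simps)
  then show ?case
    using bound deriv_ln_scaled_density[OF pos diff \<open>0 < l\<close>] \<open>0 < l\<close> by (simp add: abs_div)
qed

lemma eventually_abs_le_if_mult_bounded:
  fixes g :: "real \<Rightarrow> real"
  assumes "\<forall>\<^sub>F l in at_top. l * \<bar>g l\<bar> \<le> B" and "0 < \<epsilon>"
  shows "\<forall>\<^sub>F l in at_top. \<bar>g l\<bar> \<le> \<epsilon>"
  using assms(1) eventually_ge_at_top[of "B / \<epsilon>"] eventually_gt_at_top[of 0]
proof eventually_elim
  case (elim l)
  then have "B \<le> l * \<epsilon>"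
    using \<open>0 < \<epsilon>\<close> by (simp add: pos_divide_le_eq mult.commute)
  then have "l * \<bar>g l\<bar> \<le> l * \<epsilon>"
    using elim by linarith
  then show ?case
    using \<open>0 < l\<close> by simp
qed

lemma Limsup_mult_bounded_less_infinity:
  fixes T g :: "real \<Rightarrow> real"
  assumes slope: "\<forall>\<^sub>F l in at_top. l * \<bar>g l\<bar> \<le> B" and C: "0 \<le> C"
    and T: "\<forall>\<^sub>F l in at_top. T l \<le> C * \<bar>g l\<bar>"
  shows "Limsup at_top (\<lambda>l. ereal (l * T l)) < \<infinity>"
proof -
  have "\<forall>\<^sub>F l in at_top. ereal (l * T l) \<le> ereal (C * B)"
    using slope T eventually_ge_at_top[of 0]
  proof eventually_elim
    case (elim l)
    have "l * T l \<le> l * (C * \<bar>g l\<bar>)"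
      using elim by (simp add: mult_left_mono)
    also have "\<dots> = C * (l * \<bar>g l\<bar>)"
      by (simp add: ac_simps)
    also have "\<dots> \<le> C * B"
      using elim C by (simp add: mult_left_mono)
    finally show ?case by simp
  qed
  then have "Limsup at_top (\<lambda>l. ereal (l * T l)) \<le> ereal (C * B)"
    by (rule Limsup_bounded)
  then show ?thesis
    using le_less_trans by fastforce
qed

theorem proposition2p2:
  fixes p :: "real \<Rightarrow> real" and \<sigma> x :: real
  assumes pos: "\<And>y. p y > 0"
    and diff: "\<And>y. p differentiable (at y)"
    and int: "integrable lborel p"
    and total: "integral\<^sup>L lborel p = 1"
    and bdd: "\<exists>e>0. \<exists>B. \<forall>y. \<bar>y\<bar> < e \<longrightarrow> \<bar>deriv (\<lambda>t. ln (p t)) y\<bar> \<le> B"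
    and sigma: "\<sigma> > 0"
  shows "Limsup at_top (\<lambda>l. ereal (l * tv_dist (QM p l \<sigma> x) (QR \<sigma> x))) < \<infinity> \<and>
         Limsup at_top (\<lambda>l. ereal (l * tv_dist (QB p l \<sigma> x) (QR \<sigma> x))) < \<infinity>"
proof -
  obtain e B where "0 < e" and B: "\<And>y. \<bar>y\<bar> < e \<Longrightarrow> \<bar>deriv (\<lambda>t. ln (p t)) y\<bar> \<le> B"
    using bdd by blast
  define g where "g l = deriv (\<lambda>t. ln (scaled_density p l t)) x" for l
  have slope: "\<forall>\<^sub>F l in at_top. l * \<bar>g l\<bar> \<le> B"
    unfolding g_def using eventually_mult_abs_deriv_ln_scaled_density_le[OF pos diff \<open>0 < e\<close> B] .
  have small: "\<forall>\<^sub>F l in at_top. \<bar>g l\<bar> \<le> 2 / \<sigma>\<^sup>2"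
    using sigma by (intro eventually_abs_le_if_mult_bounded[OF slope]) simp
  obtain CM where CM: "0 \<le> CM" "\<And>m. \<bar>m\<bar> \<le> 1 \<Longrightarrow>
      tv_dist (density lborel (\<lambda>y. ennreal (normal_density (x + m) \<sigma> y))) (QR \<sigma> x) \<le> CM * \<bar>m\<bar>"
    using tv_dist_normal_shift_le[OF sigma] by blast
  obtain CB where CB: "0 \<le> CB" "\<And>g. tv_dist (density lborel (\<lambda>y. ennreal
      (2 * normal_density 0 \<sigma> (y - x) / (1 + exp (- g * (y - x)))))) (QR \<sigma> x) \<le> CB * \<bar>g\<bar>"
    using tv_dist_barker_le[OF sigma] by blast
  have QM: "\<forall>\<^sub>F l in at_top. tv_dist (QM p l \<sigma> x) (QR \<sigma> x) \<le> CM * \<sigma>\<^sup>2 / 2 * \<bar>g l\<bar>"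
    using small
  proof eventually_elim
    case (elim l)
    then have "\<bar>\<sigma>\<^sup>2 / 2 * g l\<bar> \<le> 1"
      using sigma by (simp add: abs_mult field_simps)
    from CM(2)[OF this] show ?case
      by (simp add: QM_def g_def abs_mult)
  qed
  have QB: "\<forall>\<^sub>F l in at_top. tv_dist (QB p l \<sigma> x) (QR \<sigma> x) \<le> CB * \<bar>g l\<bar>"
    using CB(2) by (simp add: QB_def g_def)
  have "0 \<le> CM * \<sigma>\<^sup>2 / 2"
    using CM(1) by simp
  from Limsup_mult_bounded_less_infinity[OF slope this QM]
    Limsup_mult_bounded_less_infinity[OF slope CB(1) QB]
  show ?thesis ..
qed

end
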